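(* Let $(\mathscr{D},b)$ be a finite bilinear form with $(\mathscr{D},b)\cong(\mathscr{D},-b)$, and let $\sigma\in\{0,4\}$. Then, up to isomorphism, there is at most one finite quadratic form $(\mathscr{D},q)$ such that $q$ refines $b$, $(\mathscr{D},q)\cong(\mathscr{D},-q)$, and $\tau_1(q)/|\tau_1(q)|=e^{2\pi i\sigma/8}$, where $\tau_1(q)=\sum_{x\in\mathscr{D}}e^{2\pi i q(x)}$.
   Context: A finite bilinear form $(\mathscr{D},b)$ is a finite abelian group $\mathscr{D}$ with a symmetric, bilinear, non-degenerate map $b:\mathscr{D}\times\mathscr{D}\to\mathbb{Q}/\mathbb{Z}$. A finite quadratic form $(\mathscr{D},q)$ is a map $q:\mathscr{D}\to\mathbb{Q}/\mathbb{Z}$ with $q(nx)=n^2q(x)$ for all $n\in\mathbb{Z}$ and $q(x+y)-q(x)-q(y)$ a non-degenerate symmetric bilinear form; $q$ refines $b$ if $q(x+y)-q(x)-q(y)=b(x,y)$ for all $x,y$. Two forms (bilinear or quadratic) on $\mathscr{D}$ and $\mathscr{D}'$ are isomorphic if they are related by precomposition with a group isomorphism $\mathscr{D}\to\mathscr{D}'$. *)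

theory Defs
  imports Complex_Main
begin

text \<open>Values in Q/Z are represented by rational representatives; all conditions
are stated modulo the integers. The finite abelian group D is a finite type
of class ab_group_add.\<close>

definition qz_eq :: "rat \<Rightarrow> rat \<Rightarrow> bool" where
  "qz_eq r s \<longleftrightarrow> r - s \<in> \<int>"

definition zmul :: "int \<Rightarrow> 'a::ab_group_add \<Rightarrow> 'a" where
  "zmul n x = (if 0 \<le> n then (((+) x) ^^ nat n) 0 else - ((((+) x) ^^ nat (- n)) 0))"

definition sym_bilinear_nondeg :: "('a::{finite,ab_group_add} \<Rightarrow> 'a \<Rightarrow> rat) \<Rightarrow> bool" where
  "sym_bilinear_nondeg b \<longleftrightarrow>
     (\<forall>x y. qz_eq (b x y) (b y x)) \<and>
     (\<forall>x y z. qz_eq (b (x + y) z) (b x z + b y z)) \<and>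
     (\<forall>x. (\<forall>y. qz_eq (b x y) 0) \<longrightarrow> x = 0)"

definition finite_bilinear_form :: "('a::{finite,ab_group_add} \<Rightarrow> 'a \<Rightarrow> rat) \<Rightarrow> bool" where
  "finite_bilinear_form b \<longleftrightarrow> sym_bilinear_nondeg b"

definition assoc_bilinear :: "('a::ab_group_add \<Rightarrow> rat) \<Rightarrow> 'a \<Rightarrow> 'a \<Rightarrow> rat" where
  "assoc_bilinear q x y = q (x + y) - q x - q y"

definition finite_quadratic_form :: "('a::{finite,ab_group_add} \<Rightarrow> rat) \<Rightarrow> bool" where
  "finite_quadratic_form q \<longleftrightarrow>
     (\<forall>n x. qz_eq (q (zmul n x)) (of_int (n^2) * q x)) \<and>
     sym_bilinear_nondeg (assoc_bilinear q)"

definition refines :: "('a::ab_group_add \<Rightarrow> rat) \<Rightarrow> ('a \<Rightarrow> 'a \<Rightarrow> rat) \<Rightarrow> bool" where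
  "refines q b \<longleftrightarrow> (\<forall>x y. qz_eq (assoc_bilinear q x y) (b x y))"

definition group_iso :: "('a::ab_group_add \<Rightarrow> 'b::ab_group_add) \<Rightarrow> bool" where
  "group_iso f \<longleftrightarrow> bij f \<and> (\<forall>x y. f (x + y) = f x + f y)"

definition bil_iso :: "('a::ab_group_add \<Rightarrow> 'a \<Rightarrow> rat) \<Rightarrow> ('a \<Rightarrow> 'a \<Rightarrow> rat) \<Rightarrow> bool" where
  "bil_iso b b' \<longleftrightarrow> (\<exists>f::'a \<Rightarrow> 'a. group_iso f \<and> (\<forall>x y. qz_eq (b' (f x) (f y)) (b x y)))"

definition quad_iso :: "('a::ab_group_add \<Rightarrow> rat) \<Rightarrow> ('a \<Rightarrow> rat) \<Rightarrow> bool" where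
  "quad_iso q q' \<longleftrightarrow> (\<exists>f::'a \<Rightarrow> 'a. group_iso f \<and> (\<forall>x. qz_eq (q' (f x)) (q x)))"

definition tau1 :: "('a::finite \<Rightarrow> rat) \<Rightarrow> complex" where
  "tau1 q = (\<Sum>x\<in>UNIV. exp (2 * of_real pi * \<i> * of_rat (q x)))"

end

theory Submission
  imports Defs
begin

text \<open>Two quadratic refinements q1, q2 of the same nondegenerate form b differ by a
homomorphism into Q/Z killed by 2; by nondegeneracy it is b(-, c) for some c with 2c = 0,
so that q2(x) = q1(x + c) - q1(c). Translating the Gauss sum gives
tau1 q2 = e(-q1(c)) tau1 q1, where e(r) = exp(2 pi i r), hence equal phases force
q1(c) = 0 in Q/Z and so b(c, c) = 0. Then the map fixing {x. b(x, c) = 0} and translating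
{x. b(x, c) = 1/2} by c is an automorphism carrying q1 to q2.\<close>

lemma qz_eq_refl [simp]: "qz_eq r r"
  by (simp add: qz_eq_def)

lemma qz_eq_sym: "qz_eq r s \<Longrightarrow> qz_eq s r"
  unfolding qz_eq_def by (metis Ints_minus minus_diff_eq)

lemma qz_eq_trans [trans]: "qz_eq r s \<Longrightarrow> qz_eq s t \<Longrightarrow> qz_eq r t"
  unfolding qz_eq_def by (drule (1) Ints_add) simp

lemma qz_eq_add: "qz_eq r r' \<Longrightarrow> qz_eq s s' \<Longrightarrow> qz_eq (r + s) (r' + s')"
  unfolding qz_eq_def by (drule (1) Ints_add) (simp add: algebra_simps)

lemma qz_eq_diff: "qz_eq r r' \<Longrightarrow> qz_eq s s' \<Longrightarrow> qz_eq (r - s) (r' - s')"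
  unfolding qz_eq_def by (drule (1) Ints_diff) (simp add: algebra_simps)

lemma qz_eq_add_Ints: "s \<in> \<int> \<Longrightarrow> qz_eq (r + s) r"
  by (simp add: qz_eq_def)

lemma qz_eq_Ints_iff: "qz_eq r s \<Longrightarrow> r \<in> \<int> \<longleftrightarrow> s \<in> \<int>"
  unfolding qz_eq_def using Ints_add[of "r - s" s] Ints_diff[of r "r - s"] by auto

lemma half_of_int_in_Ints_iff: "(of_int k / 2 :: rat) \<in> \<int> \<longleftrightarrow> even k"
proof
  assume "of_int k / 2 \<in> (\<int> :: rat set)"
  then obtain j where "(of_int k / 2 :: rat) = of_int j" by (auto elim: Ints_cases)
  then have "k = 2 * j" by (simp add: field_simps flip: of_int_eq_iff)
  then show "even k" by simp
qed auto

lemma add_Ints_iff_of_double_Ints: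
  fixes r s :: rat
  assumes "2 * r \<in> \<int>" "2 * s \<in> \<int>"
  shows "r + s \<in> \<int> \<longleftrightarrow> (r \<in> \<int> \<longleftrightarrow> s \<in> \<int>)"
proof -
  obtain m n :: int where "r = of_int m / 2" "s = of_int n / 2"
    using assms by (auto elim!: Ints_cases simp: field_simps)
  moreover have "r + s = of_int (m + n) / 2"
    using calculation by (simp add: add_divide_distrib)
  ultimately show ?thesis by (simp only: half_of_int_in_Ints_iff) simp
qed

definition exp_2pi_i :: "rat \<Rightarrow> complex" where
  "exp_2pi_i r = exp (2 * of_real pi * \<i> * of_rat r)"

lemma exp_2pi_i_eq_cis: "exp_2pi_i r = cis (2 * pi * of_rat r)"
proof -
  have "(of_rat r :: complex) = of_real (of_rat r)"
    by (cases r) (simp add: of_rat_rat)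
  then show ?thesis
    unfolding exp_2pi_i_def cis_conv_exp by (simp add: mult_ac)
qed

lemma exp_2pi_i_add: "exp_2pi_i (r + s) = exp_2pi_i r * exp_2pi_i s"
  unfolding exp_2pi_i_def by (simp add: of_rat_add distrib_left flip: exp_add)

lemma exp_2pi_i_eq_1_iff: "exp_2pi_i r = 1 \<longleftrightarrow> r \<in> \<int>"
proof -
  have "exp_2pi_i r = 1 \<longleftrightarrow> (\<exists>n::int. 2 * pi * of_rat r = 0 + 2 * pi * n)"
    unfolding exp_2pi_i_eq_cis complex_eq_iff sin_cos_eq_iff[symmetric] by auto
  also have "\<dots> \<longleftrightarrow> (\<exists>n::int. r = of_int n)"
    by (metis add_0 mult_cancel_left of_rat_eq_iff of_rat_of_int_eq pi_neq_zero zero_neq_numeral mult_eq_0_iff)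
  finally show ?thesis by (auto elim: Ints_cases)
qed

lemma exp_2pi_i_cong:
  assumes "qz_eq r s"
  shows "exp_2pi_i r = exp_2pi_i s"
proof -
  have "exp_2pi_i r = exp_2pi_i (r - s) * exp_2pi_i s"
    by (simp flip: exp_2pi_i_add)
  then show ?thesis
    using assms by (simp add: qz_eq_def exp_2pi_i_eq_1_iff)
qed

lemma tau1_eq_sum_exp_2pi_i: "tau1 q = (\<Sum>x\<in>UNIV. exp_2pi_i (q x))"
  by (simp add: tau1_def exp_2pi_i_def)

lemma sum_UNIV_translate:
  fixes f :: "'a::{finite,ab_group_add} \<Rightarrow> 'b::comm_monoid_add"
  shows "(\<Sum>x\<in>UNIV. f (x + c)) = (\<Sum>x\<in>UNIV. f x)"
  by (rule sum.reindex_bij_witness[of _ "\<lambda>x. x - c" "\<lambda>x. x + c"]) auto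

definition qz_hom :: "('a::ab_group_add \<Rightarrow> rat) \<Rightarrow> bool" where
  "qz_hom h \<longleftrightarrow> (\<forall>x y. qz_eq (h (x + y)) (h x + h y))"

lemma qz_hom_zero: "qz_hom h \<Longrightarrow> h 0 \<in> \<int>"
  unfolding qz_hom_def by (drule spec2[of _ 0 0]) (simp add: qz_eq_def)

lemma qz_hom_diff: "qz_hom g \<Longrightarrow> qz_hom h \<Longrightarrow> qz_hom (\<lambda>x. g x - h x)"
  unfolding qz_hom_def
proof (intro allI)
  fix x y
  assume "\<forall>x y. qz_eq (g (x + y)) (g x + g y)" "\<forall>x y. qz_eq (h (x + y)) (h x + h y)"
  then have "qz_eq (g (x + y) - h (x + y)) ((g x + g y) - (h x + h y))"
    by (simp add: qz_eq_diff)
  then show "qz_eq (g (x + y) - h (x + y)) (g x - h x + (g y - h y))"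
    by (simp add: algebra_simps)
qed

lemma sum_exp_2pi_i_qz_hom:
  fixes h :: "'a::{finite,ab_group_add} \<Rightarrow> rat"
  assumes "qz_hom h"
  shows "(\<Sum>x\<in>UNIV. exp_2pi_i (h x)) = (if \<forall>x. h x \<in> \<int> then of_nat (card (UNIV :: 'a set)) else 0)"
proof (cases "\<forall>x. h x \<in> \<int>")
  case True
  then have "exp_2pi_i (h x) = 1" for x
    by (simp add: exp_2pi_i_eq_1_iff)
  with True show ?thesis by simp
next
  case False
  then obtain y where y: "h y \<notin> \<int>" by blast
  let ?S = "\<Sum>x\<in>UNIV. exp_2pi_i (h x)"
  have "?S = (\<Sum>x\<in>UNIV. exp_2pi_i (h (x + y)))"
    by (rule sum_UNIV_translate[symmetric])
  also have "\<dots> = ?S * exp_2pi_i (h y)"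
  proof -
    have "exp_2pi_i (h (x + y)) = exp_2pi_i (h x) * exp_2pi_i (h y)" for x
      using assms exp_2pi_i_cong by (simp add: qz_hom_def flip: exp_2pi_i_add)
    then show ?thesis by (simp add: sum_distrib_right)
  qed
  finally have "?S * (exp_2pi_i (h y) - 1) = 0"
    by (simp add: algebra_simps)
  then show ?thesis
    using y False by (simp add: exp_2pi_i_eq_1_iff)
qed

lemma qz_hom_left:
  "sym_bilinear_nondeg b \<Longrightarrow> qz_hom (\<lambda>x. b x z)"
  by (simp add: sym_bilinear_nondeg_def qz_hom_def)

lemma qz_hom_right:
  assumes "sym_bilinear_nondeg b"
  shows "qz_hom (b y)"
  unfolding qz_hom_def
proof (intro allI)
  fix z w
  have sym: "qz_eq (b x y) (b y x)" and add: "qz_eq (b (x + y) v) (b x v + b y v)" for x y v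
    using assms by (simp_all add: sym_bilinear_nondeg_def)
  have "qz_eq (b y (z + w)) (b (z + w) y)" by (rule sym)
  also have "qz_eq \<dots> (b z y + b w y)" by (rule add)
  also have "qz_eq \<dots> (b y z + b y w)" by (intro qz_eq_add sym)
  finally show "qz_eq (b y (z + w)) (b y z + b y w)" .
qed

lemma sum_exp_2pi_i_bilinear:
  fixes b :: "'a::{finite,ab_group_add} \<Rightarrow> 'a \<Rightarrow> rat"
  assumes "sym_bilinear_nondeg b"
  shows "(\<Sum>z\<in>UNIV. exp_2pi_i (b y z)) = (if y = 0 then of_nat (card (UNIV :: 'a set)) else 0)"
proof -
  have "(\<forall>z. b y z \<in> \<int>) \<longleftrightarrow> y = 0"
    using assms qz_hom_zero[OF qz_hom_left[OF assms]]
    by (auto simp: sym_bilinear_nondeg_def qz_eq_def)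
  then show ?thesis
    using sum_exp_2pi_i_qz_hom[OF qz_hom_right[OF assms]] by simp
qed

lemma qz_hom_represented_by_bilinear:
  fixes b :: "'a::{finite,ab_group_add} \<Rightarrow> 'a \<Rightarrow> rat"
  assumes b: "sym_bilinear_nondeg b" and d: "qz_hom d"
  obtains c where "\<And>y. qz_eq (d y) (b y c)"
proof -
  have "\<exists>c. \<forall>y. qz_eq (d y) (b y c)"
  proof (rule ccontr)
    assume none: "\<nexists>c. \<forall>y. qz_eq (d y) (b y c)"
    have inner: "(\<Sum>y\<in>UNIV. exp_2pi_i (b y z - d y)) = 0" for z
    proof -
      have "\<not> (\<forall>y. b y z - d y \<in> \<int>)"
        using none by (metis qz_eq_def qz_eq_sym)
      then show ?thesis
        using sum_exp_2pi_i_qz_hom[OF qz_hom_diff[OF qz_hom_left[OF b] d]] by simp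
    qed
    \<comment> \<open>Summing first over y gives 0, summing first over z picks out y = 0 by orthogonality.\<close>
    have "0 = (\<Sum>z\<in>UNIV. \<Sum>y\<in>UNIV. exp_2pi_i (b y z - d y))"
      by (simp add: inner)
    also have "\<dots> = (\<Sum>y\<in>UNIV. exp_2pi_i (- d y) * (\<Sum>z\<in>UNIV. exp_2pi_i (b y z)))"
      by (subst sum.swap) (simp add: sum_distrib_left flip: exp_2pi_i_add)
    also have "\<dots> = exp_2pi_i (- d 0) * of_nat (card (UNIV :: 'a set))"
      by (simp add: sum_exp_2pi_i_bilinear[OF b] if_distrib cong: if_cong)
    also have "\<dots> = of_nat (card (UNIV :: 'a set))"
      using qz_hom_zero[OF d] by (simp add: exp_2pi_i_eq_1_iff)
    finally show False by simp
  qed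
  then show thesis using that by blast
qed

lemma bilinear_2_torsion_double_Ints:
  assumes "sym_bilinear_nondeg b" "c + c = 0"
  shows "2 * b x c \<in> \<int>"
proof -
  have "qz_eq (b x (c + c)) (b x c + b x c)"
    using qz_hom_right[OF assms(1), of x] unfolding qz_hom_def by (rule spec2)
  moreover have "b x (c + c) \<in> \<int>"
    using qz_hom_zero[OF qz_hom_right[OF assms(1)]] assms(2) by simp
  ultimately have "b x c + b x c \<in> \<int>"
    using qz_eq_Ints_iff by blast
  then show ?thesis
    by (metis mult_2)
qed

lemma refines_add:
  "refines q b \<Longrightarrow> qz_eq (q (x + y)) (q x + q y + b x y)"
  by (simp add: refines_def assoc_bilinear_def qz_eq_def algebra_simps)

lemma quadratic_double:
  assumes "finite_quadratic_form q" "refines q b"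
  shows "qz_eq (2 * q x) (b x x)"
proof -
  have "zmul 2 x = x + x"
    by (simp add: zmul_def numeral_2_eq_2)
  moreover have "qz_eq (q (zmul 2 x)) (of_int (2\<^sup>2) * q x)"
    using assms(1) by (simp only: finite_quadratic_form_def)
  ultimately have "qz_eq (q (x + x)) (4 * q x)"
    by simp
  have "b x x = (q x + q x + b x x) - q x - q x"
    by simp
  also have "qz_eq \<dots> (q (x + x) - q x - q x)"
    by (intro qz_eq_diff qz_eq_refl qz_eq_sym[OF refines_add[OF assms(2)]])
  also have "qz_eq \<dots> (4 * q x - q x - q x)"
    by (intro qz_eq_diff qz_eq_refl) fact
  also have "4 * q x - q x - q x = 2 * q x"
    by simp
  finally show ?thesis by (rule qz_eq_sym)
qed

lemma qz_hom_diff_refinements: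
  assumes "refines q1 b" "refines q2 b"
  shows "qz_hom (\<lambda>x. q2 x - q1 x)"
  unfolding qz_hom_def
proof (intro allI)
  fix x y
  have "qz_eq (q2 (x + y) - q1 (x + y)) ((q2 x + q2 y + b x y) - (q1 x + q1 y + b x y))"
    by (intro qz_eq_diff refines_add assms)
  then show "qz_eq (q2 (x + y) - q1 (x + y)) (q2 x - q1 x + (q2 y - q1 y))"
    by (simp add: algebra_simps)
qed

lemma refinements_differ_by_2_torsion:
  assumes b: "sym_bilinear_nondeg b"
    and q1: "finite_quadratic_form q1" "refines q1 b"
    and q2: "finite_quadratic_form q2" "refines q2 b"
  obtains c where "c + c = 0" and "\<And>x. qz_eq (q2 x) (q1 x + b x c)"
proof -
  obtain c where c: "\<And>y. qz_eq (q2 y - q1 y) (b y c)"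
    using qz_hom_represented_by_bilinear[OF b qz_hom_diff_refinements[OF q1(2) q2(2)]] by blast
  have "b (c + c) y \<in> \<int>" for y
  proof -
    have "qz_eq (b (c + c) y) (b c y + b c y)"
      using qz_hom_left[OF b, of y] unfolding qz_hom_def by (rule spec2)
    also have "qz_eq \<dots> (b y c + b y c)"
      using b by (intro qz_eq_add) (simp_all add: sym_bilinear_nondeg_def)
    also have "qz_eq \<dots> ((q2 y - q1 y) + (q2 y - q1 y))"
      using qz_eq_sym[OF c] by (intro qz_eq_add)
    also have "\<dots> = 2 * q2 y - 2 * q1 y"
      by simp
    also have "qz_eq \<dots> (b y y - b y y)"
      by (intro qz_eq_diff quadratic_double q1 q2)
    finally show ?thesis
      by (simp add: qz_eq_def)
  qed
  then have "c + c = 0"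
    using b by (simp add: sym_bilinear_nondeg_def qz_eq_def)
  moreover have "qz_eq (q2 x) (q1 x + b x c)" for x
    using qz_eq_add[OF qz_eq_refl[of "q1 x"] c[of x]] by simp
  ultimately show thesis
    using that by blast
qed

lemma tau1_translate:
  assumes "refines q b" and q': "\<And>x. qz_eq (q' x) (q x + b x c)"
  shows "tau1 q' = exp_2pi_i (- q c) * tau1 q"
proof -
  have "exp_2pi_i (q' x) = exp_2pi_i (q (x + c)) * exp_2pi_i (- q c)" for x
  proof -
    have "qz_eq (q' x) ((q x + q c + b x c) + - q c)"
      using q' by simp
    also have "qz_eq \<dots> (q (x + c) + - q c)"
      by (intro qz_eq_add qz_eq_refl qz_eq_sym[OF refines_add[OF assms(1)]])
    finally show ?thesis
      by (simp add: exp_2pi_i_cong flip: exp_2pi_i_add)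
  qed
  then have "tau1 q' = (\<Sum>x\<in>UNIV. exp_2pi_i (q (x + c))) * exp_2pi_i (- q c)"
    by (simp add: tau1_eq_sum_exp_2pi_i sum_distrib_right)
  then show ?thesis
    using sum_UNIV_translate[of "\<lambda>x. exp_2pi_i (q x)" c]
    by (simp add: tau1_eq_sum_exp_2pi_i mult.commute)
qed

lemma group_iso_reflection:
  assumes b: "sym_bilinear_nondeg b" and "c + c = 0" and "b c c \<in> \<int>"
  shows "group_iso (\<lambda>x. if b x c \<in> \<int> then x else x + c)" (is "group_iso ?f")
proof -
  have parity: "b (x + y) c \<in> \<int> \<longleftrightarrow> (b x c \<in> \<int> \<longleftrightarrow> b y c \<in> \<int>)" for x y
  proof -
    have "qz_eq (b (x + y) c) (b x c + b y c)"
      using qz_hom_left[OF b, of c] unfolding qz_hom_def by (rule spec2)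
    then have "b (x + y) c \<in> \<int> \<longleftrightarrow> b x c + b y c \<in> \<int>"
      by (rule qz_eq_Ints_iff)
    also have "\<dots> \<longleftrightarrow> (b x c \<in> \<int> \<longleftrightarrow> b y c \<in> \<int>)"
      using bilinear_2_torsion_double_Ints[OF b \<open>c + c = 0\<close>] by (intro add_Ints_iff_of_double_Ints)
    finally show ?thesis .
  qed
  have hom: "?f (x + y) = ?f x + ?f y" for x y
    using parity[of x y] \<open>c + c = 0\<close> by (auto simp: algebra_simps)
  have "?f (?f x) = x" for x
    using parity[of x c] assms(2,3) by (auto simp: algebra_simps)
  then have "bij ?f"
    by (rule involuntory_imp_bij)
  with hom show ?thesis
    unfolding group_iso_def by blast
qed

lemma quad_iso_translate:
  assumes b: "sym_bilinear_nondeg b"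
    and q: "finite_quadratic_form q" "refines q b"
    and c: "c + c = 0" "q c \<in> \<int>"
    and q': "\<And>x. qz_eq (q' x) (q x + b x c)"
  shows "quad_iso q q'"
proof -
  have bcc: "b c c \<in> \<int>"
    using quadratic_double[OF q, of c] c(2) by (simp add: qz_eq_Ints_iff[symmetric])
  define f where "f = (\<lambda>x. if b x c \<in> \<int> then x else x + c)"
  have "qz_eq (q' (f x)) (q x)" for x
  proof (cases "b x c \<in> \<int>")
    case True
    have "qz_eq (q' x) (q x + b x c)"
      by (rule q')
    also have "qz_eq \<dots> (q x)"
      using True by (rule qz_eq_add_Ints)
    finally show ?thesis
      using True by (simp add: f_def)
  next
    case False
    have "qz_eq (q' (x + c)) (q (x + c) + b (x + c) c)"
      by (rule q')
    also have "qz_eq \<dots> ((q x + q c + b x c) + (b x c + b c c))"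
      using qz_hom_left[OF b, of c] unfolding qz_hom_def by (intro qz_eq_add refines_add q) blast
    also have "\<dots> = q x + (q c + b c c + 2 * b x c)"
      by (simp add: algebra_simps)
    also have "qz_eq \<dots> (q x)"
      using c(2) bcc bilinear_2_torsion_double_Ints[OF b c(1)] by (intro qz_eq_add_Ints Ints_add)
    finally show ?thesis
      using False by (simp add: f_def)
  qed
  moreover have "group_iso f"
    unfolding f_def by (rule group_iso_reflection[OF b c(1) bcc])
  ultimately show ?thesis
    unfolding quad_iso_def by blast
qed

lemma sgn_exp_2pi_i [simp]: "sgn (exp_2pi_i r) = exp_2pi_i r"
  by (simp add: exp_2pi_i_eq_cis)

theorem quad_iso_if_sgn_tau1_eq:
  assumes b: "sym_bilinear_nondeg b"
    and q1: "finite_quadratic_form q1" "refines q1 b"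
    and q2: "finite_quadratic_form q2" "refines q2 b"
    and "tau1 q1 \<noteq> 0" and same_phase: "sgn (tau1 q1) = sgn (tau1 q2)"
  shows "quad_iso q1 q2"
proof -
  obtain c where c: "c + c = 0" and q2_q1: "\<And>x. qz_eq (q2 x) (q1 x + b x c)"
    using refinements_differ_by_2_torsion[OF b q1 q2] by blast
  have "sgn (tau1 q1) = exp_2pi_i (- q1 c) * sgn (tau1 q1)"
    using same_phase tau1_translate[OF q1(2) q2_q1] by (simp add: sgn_mult)
  then have "exp_2pi_i (- q1 c) = 1"
    using \<open>tau1 q1 \<noteq> 0\<close> by (simp add: sgn_zero_iff)
  then have "q1 c \<in> \<int>"
    by (simp add: exp_2pi_i_eq_1_iff)
  then show ?thesis
    using quad_iso_translate[OF b q1 c _ q2_q1] by blast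
qed

theorem proposition6:
  fixes b :: "'a::{finite,ab_group_add} \<Rightarrow> 'a \<Rightarrow> rat" and \<sigma> :: real
  assumes "finite_bilinear_form b"
    and "bil_iso b (\<lambda>x y. - b x y)"
    and "\<sigma> = 0 \<or> \<sigma> = 4"
  shows "\<forall>q1 q2. (finite_quadratic_form q1 \<and> refines q1 b \<and> quad_iso q1 (\<lambda>x. - q1 x) \<and>
                   tau1 q1 / of_real (cmod (tau1 q1)) = exp (2 * of_real pi * \<i> * of_real \<sigma> / 8)) \<and>
                 (finite_quadratic_form q2 \<and> refines q2 b \<and> quad_iso q2 (\<lambda>x. - q2 x) \<and>
                   tau1 q2 / of_real (cmod (tau1 q2)) = exp (2 * of_real pi * \<i> * of_real \<sigma> / 8))
                 \<longrightarrow> quad_iso q1 q2"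
proof (intro allI impI)
  fix q1 q2 :: "'a \<Rightarrow> rat"
  let ?phase = "exp (2 * of_real pi * \<i> * of_real \<sigma> / 8)"
  assume "(finite_quadratic_form q1 \<and> refines q1 b \<and> quad_iso q1 (\<lambda>x. - q1 x) \<and>
             tau1 q1 / of_real (cmod (tau1 q1)) = ?phase) \<and>
          (finite_quadratic_form q2 \<and> refines q2 b \<and> quad_iso q2 (\<lambda>x. - q2 x) \<and>
             tau1 q2 / of_real (cmod (tau1 q2)) = ?phase)"
  then have q1: "finite_quadratic_form q1" "refines q1 b" "sgn (tau1 q1) = ?phase"
    and q2: "finite_quadratic_form q2" "refines q2 b" "sgn (tau1 q2) = ?phase"
    by (simp_all add: sgn_eq)
  have "tau1 q1 \<noteq> 0"
    using q1(3) by auto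
  then show "quad_iso q1 q2"
    using assms(1) q1 q2
    by (intro quad_iso_if_sgn_tau1_eq[of b]) (simp_all add: finite_bilinear_form_def)
qed

end
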